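(* Let $T$ be a string of length $n$ and $1\le i\le j<n$. Let $k=|\mathit{lrs}_{i,j+1}|$ and $\alpha=T[j+1]$. Then $[j+1-k,j+1]\in\mathsf{MUS}(T[i..j+1])$ if and only if $T[j+1-k..j+1]=\alpha^{k+1}$ or $k\le|\mathit{lrs}_{i,j}|$.
   Context: $T[a..b]$ denotes the substring of $T$ from position $a$ to $b$; $\alpha^m$ is the string of $m$ copies of character $\alpha$. For strings $S,w$, $\#\mathit{occ}_S(w)$ is the number of positions at which $w$ occurs in $S$, with $\#\mathit{occ}_S(\varepsilon)=|S|+1$. A substring $w$ of $S$ is unique in $S$ if $\#\mathit{occ}_S(w)=1$ and repeating if $\#\mathit{occ}_S(w)\ge 2$. For $1\le i\le j\le n$, $\mathsf{MUS}(T[i..j])$ is the set of intervals $[s,t]$ (positions in $T$) with $i\le s\le t\le j$ such that $T[s..t]$ is unique in $T[i..j]$ and every proper substring of $T[s..t]$ (including the empty string) is repeating in $T[i..j]$. $\mathit{lrs}_{i,j}$ is the longest suffix of $T[i..j]$ that occurs at least twice in $T[i..j]$ (possibly empty). *)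

theory Defs
  imports Main
begin

text \<open>Strings are lists; positions in T are 1-based as in the paper.
  substr T a b is T[a..b] (empty if b < a).\<close>

definition substr :: "'a list \<Rightarrow> nat \<Rightarrow> nat \<Rightarrow> 'a list" where
  "substr T a b = take (Suc b - a) (drop (a - 1) T)"

text \<open>Number of occurrences of w in S (occ S [] = |S|+1).\<close>
definition occ :: "'a list \<Rightarrow> 'a list \<Rightarrow> nat" where
  "occ S w = card {p. p + length w \<le> length S \<and> take (length w) (drop p S) = w}"

definition unique_in :: "'a list \<Rightarrow> 'a list \<Rightarrow> bool" where
  "unique_in S w \<longleftrightarrow> occ S w = 1"

definition repeating_in :: "'a list \<Rightarrow> 'a list \<Rightarrow> bool" where
  "repeating_in S w \<longleftrightarrow> occ S w \<ge> 2"

definition is_substring :: "'a list \<Rightarrow> 'a list \<Rightarrow> bool" where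
  "is_substring u w \<longleftrightarrow> (\<exists>p q. w = p @ u @ q)"

definition MUS :: "'a list \<Rightarrow> nat \<Rightarrow> nat \<Rightarrow> (nat \<times> nat) set" where
  "MUS T i j = {(s, t). i \<le> s \<and> s \<le> t \<and> t \<le> j \<and>
      unique_in (substr T i j) (substr T s t) \<and>
      (\<forall>u. is_substring u (substr T s t) \<and> u \<noteq> substr T s t
            \<longrightarrow> repeating_in (substr T i j) u)}"

text \<open>Longest suffix of S occurring at least twice in S (possibly empty).\<close>
definition lrs_of :: "'a list \<Rightarrow> 'a list" where
  "lrs_of S = drop (length S - Max {k. k \<le> length S \<and> repeating_in S (drop (length S - k) S)}) S"

definition lrs :: "'a list \<Rightarrow> nat \<Rightarrow> nat \<Rightarrow> 'a list" where
  "lrs T i j = lrs_of (substr T i j)"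

end

theory Submission imports Defs begin

text \<open>Put S = T[i..j+1] and let w be its suffix of length k+1. Since k is the length of the
  longest repeating suffix of S, w is unique in S, while its tail, the longest repeating suffix
  itself, repeats. Every proper substring of w lies in its tail or in its prefix v of length k,
  so w is a MUS exactly when v repeats in S. An occurrence of v in S either lies inside
  T[i..j], of which v is a suffix, which means k \<le> |lrs_{i,j}|; or it is the suffix occurrence
  in S, and then v is both a prefix and a suffix of w, so w is a run of its last character.\<close>

definition occurrences :: "'a list \<Rightarrow> 'a list \<Rightarrow> nat set" where
  "occurrences S w = {p. p + length w \<le> length S \<and> take (length w) (drop p S) = w}"

lemma occ_eq_card_occurrences: "occ S w = card (occurrences S w)"
  by (simp add: occ_def occurrences_def)

lemma finite_occurrences: "finite (occurrences S w)"
  by (rule finite_subset[of _ "{..length S}"]) (auto simp: occurrences_def)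

lemma repeating_in_iff_two_occurrences:
  "repeating_in S w \<longleftrightarrow> (\<exists>p \<in> occurrences S w. \<exists>q \<in> occurrences S w. p \<noteq> q)"
proof -
  have "repeating_in S w \<longleftrightarrow> \<not> card (occurrences S w) \<le> Suc 0"
    by (auto simp: repeating_in_def occ_eq_card_occurrences)
  then show ?thesis
    using card_le_Suc0_iff_eq[OF finite_occurrences] by blast
qed

lemma unique_in_if_occurs_and_not_repeating:
  assumes "p \<in> occurrences S w" and "\<not> repeating_in S w"
  shows "unique_in S w"
proof -
  have "card (occurrences S w) \<noteq> 0"
    using assms(1) finite_occurrences by (metis card_0_eq empty_iff)
  then show ?thesis
    using assms(2) by (simp add: unique_in_def repeating_in_def occ_eq_card_occurrences)
qed

lemma occurrences_infix:
  assumes "P \<in> occurrences S (p @ u @ q)"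
  shows "P + length p \<in> occurrences S u"
proof -
  define R where "R = drop (length (p @ u @ q)) (drop P S)"
  have fits: "P + length p + length u + length q \<le> length S"
    using assms by (simp add: occurrences_def add.assoc)
  have "drop P S = take (length (p @ u @ q)) (drop P S) @ R"
    unfolding R_def by (rule append_take_drop_id[symmetric])
  also have "take (length (p @ u @ q)) (drop P S) = p @ u @ q"
    using assms by (simp add: occurrences_def)
  finally have "drop (length p) (drop P S) = u @ q @ R"
    by simp
  then have "drop (P + length p) S = u @ q @ R"
    by (simp add: add.commute)
  then show ?thesis
    using fits by (simp add: occurrences_def)
qed

lemma repeating_in_infix:
  assumes "repeating_in S (p @ u @ q)"
  shows "repeating_in S u"
proof -
  obtain a b where "a \<in> occurrences S (p @ u @ q)" "b \<in> occurrences S (p @ u @ q)" "a \<noteq> b"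
    using assms unfolding repeating_in_iff_two_occurrences by blast
  then have "a + length p \<in> occurrences S u" "b + length p \<in> occurrences S u"
    "a + length p \<noteq> b + length p"
    by (simp_all add: occurrences_infix)
  then show ?thesis
    unfolding repeating_in_iff_two_occurrences by blast
qed

lemma occurrences_self: "occurrences S S = {0}"
  by (auto simp: occurrences_def)

lemma not_repeating_in_self: "\<not> repeating_in S S"
  by (simp add: repeating_in_def occ_eq_card_occurrences occurrences_self)

lemma repeating_in_Nil:
  assumes "S \<noteq> []"
  shows "repeating_in S []"
proof -
  have "0 \<in> occurrences S []" "1 \<in> occurrences S []"
    using assms by (auto simp: occurrences_def Suc_le_eq)
  then show ?thesis
    unfolding repeating_in_iff_two_occurrences by force
qed

lemma occurrences_snoc:
  "p \<in> occurrences (S @ [a]) w \<longleftrightarrow>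
     p \<in> occurrences S w \<or> (p + length w = Suc (length S) \<and> drop p (S @ [a]) = w)"
  by (auto simp: occurrences_def le_Suc_eq)

lemma drop_Suc_length_append: "drop (Suc (length x)) (x @ w) = tl w"
  by (simp add: drop_Suc)

lemma tl_snoc_eq_iff_replicate: "tl (v @ [a]) = v \<longleftrightarrow> v = replicate (length v) a"
proof (induction v)
  case (Cons b v)
  then show ?case
    by (cases v) (auto simp: replicate_append_same)
qed simp

lemma repeating_in_snoc_suffix_iff:
  "repeating_in (x @ v @ [a]) v \<longleftrightarrow>
     repeating_in (x @ v) v \<or> v = replicate (length v) a"
proof
  assume "repeating_in (x @ v @ [a]) v"
  then obtain p q where occs: "p \<in> occurrences (x @ v @ [a]) v" "q \<in> occurrences (x @ v @ [a]) v"
    and "p \<noteq> q"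
    unfolding repeating_in_iff_two_occurrences by blast
  show "repeating_in (x @ v) v \<or> v = replicate (length v) a"
  proof (cases "p \<in> occurrences (x @ v) v \<and> q \<in> occurrences (x @ v) v")
    case True
    then show ?thesis
      using \<open>p \<noteq> q\<close> unfolding repeating_in_iff_two_occurrences by blast
  next
    case False
    then obtain r where "r + length v = Suc (length (x @ v))" and suffix: "drop r (x @ v @ [a]) = v"
      using occs occurrences_snoc[of _ "x @ v" a v, unfolded append_assoc] by blast
    then have "r = Suc (length x)"
      by simp
    then have "tl (v @ [a]) = v"
      using suffix by (simp only: drop_Suc_length_append)
    then show ?thesis
      by (simp add: tl_snoc_eq_iff_replicate)
  qed
next
  assume "repeating_in (x @ v) v \<or> v = replicate (length v) a"
  then show "repeating_in (x @ v @ [a]) v"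
  proof
    assume "repeating_in (x @ v) v"
    then show ?thesis
      using occurrences_snoc[of _ "x @ v" a v, unfolded append_assoc]
      unfolding repeating_in_iff_two_occurrences by blast
  next
    assume "v = replicate (length v) a"
    then have shifted: "drop (Suc (length x)) (x @ v @ [a]) = v"
      by (simp only: drop_Suc_length_append tl_snoc_eq_iff_replicate)
    have "length x \<in> occurrences (x @ v @ [a]) v"
      by (simp add: occurrences_def)
    moreover have "Suc (length x) \<in> occurrences (x @ v @ [a]) v"
      unfolding occurrences_def mem_Collect_eq shifted by simp
    ultimately show ?thesis
      unfolding repeating_in_iff_two_occurrences using n_not_Suc_n by blast
  qed
qed

lemma proper_substrings_repeating_iff:
  assumes "w \<noteq> []"
  shows "(\<forall>u. is_substring u w \<and> u \<noteq> w \<longrightarrow> repeating_in S u) \<longleftrightarrow>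
           repeating_in S (butlast w) \<and> repeating_in S (tl w)"
proof
  assume "\<forall>u. is_substring u w \<and> u \<noteq> w \<longrightarrow> repeating_in S u"
  moreover have "w = [] @ butlast w @ [last w]" and "w = [hd w] @ tl w @ []"
    using assms by simp_all
  then have "is_substring (butlast w) w" and "is_substring (tl w) w"
    unfolding is_substring_def by blast+
  moreover have "butlast w \<noteq> w"
    using assms by (cases w rule: rev_cases) simp_all
  moreover have "tl w \<noteq> w"
    using assms by (cases w) simp_all
  ultimately show "repeating_in S (butlast w) \<and> repeating_in S (tl w)"
    by blast
next
  assume repeats: "repeating_in S (butlast w) \<and> repeating_in S (tl w)"
  show "\<forall>u. is_substring u w \<and> u \<noteq> w \<longrightarrow> repeating_in S u"
  proof (intro allI impI)
    fix u
    assume "is_substring u w \<and> u \<noteq> w"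
    then obtain p q where w: "w = p @ u @ q" and "p \<noteq> [] \<or> q \<noteq> []"
      unfolding is_substring_def by (metis append_Nil append_Nil2)
    then consider "tl w = tl p @ u @ q" | "butlast w = p @ u @ butlast q"
      by (auto simp: butlast_append)
    then show "repeating_in S u"
      by cases (use repeats repeating_in_infix in metis)+
  qed
qed

definition repeating_suffix_lengths :: "'a list \<Rightarrow> nat set" where
  "repeating_suffix_lengths S = {k. k \<le> length S \<and> repeating_in S (drop (length S - k) S)}"

lemma finite_repeating_suffix_lengths: "finite (repeating_suffix_lengths S)"
  by (rule finite_subset[of _ "{..length S}"]) (auto simp: repeating_suffix_lengths_def)

lemma Max_repeating_suffix_lengths_in:
  assumes "S \<noteq> []"
  shows "Max (repeating_suffix_lengths S) \<in> repeating_suffix_lengths S"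
proof (rule Max_in[OF finite_repeating_suffix_lengths])
  show "repeating_suffix_lengths S \<noteq> {}"
    using repeating_in_Nil[OF assms] by (auto simp: repeating_suffix_lengths_def)
qed

lemma length_lrs_of:
  assumes "S \<noteq> []"
  shows "length (lrs_of S) = Max (repeating_suffix_lengths S)"
proof -
  have "Max (repeating_suffix_lengths S) \<le> length S"
    using Max_repeating_suffix_lengths_in[OF assms] by (simp add: repeating_suffix_lengths_def)
  then show ?thesis
    by (simp add: lrs_of_def repeating_suffix_lengths_def[symmetric])
qed

lemma length_lrs_of_less:
  assumes "S \<noteq> []"
  shows "length (lrs_of S) < length S"
proof -
  have "length S \<notin> repeating_suffix_lengths S"
    using not_repeating_in_self by (simp add: repeating_suffix_lengths_def)
  then have "length (lrs_of S) \<noteq> length S"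
    using Max_repeating_suffix_lengths_in[OF assms] length_lrs_of[OF assms] by auto
  moreover have "length (lrs_of S) \<le> length S"
    by (simp add: lrs_of_def)
  ultimately show ?thesis
    by simp
qed

lemma repeating_suffix_iff_le_length_lrs_of:
  assumes "S \<noteq> []" and "k \<le> length S"
  shows "repeating_in S (drop (length S - k) S) \<longleftrightarrow> k \<le> length (lrs_of S)"
proof
  assume "repeating_in S (drop (length S - k) S)"
  then have "k \<in> repeating_suffix_lengths S"
    using assms(2) by (simp add: repeating_suffix_lengths_def)
  then show "k \<le> length (lrs_of S)"
    using Max_ge[OF finite_repeating_suffix_lengths] length_lrs_of[OF assms(1)] by simp
next
  define m where "m = length (lrs_of S)"
  define L where "L = drop (length S - m) S"
  assume "k \<le> length (lrs_of S)"
  then have "drop (m - k) L = drop (length S - k) S"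
    using length_lrs_of_less[OF assms(1)] unfolding L_def m_def by (simp add: add.commute)
  then have "L = take (m - k) L @ drop (length S - k) S @ []"
    by (metis append_Nil2 append_take_drop_id)
  moreover have "repeating_in S L"
    using Max_repeating_suffix_lengths_in[OF assms(1)] length_lrs_of[OF assms(1)]
    unfolding L_def m_def repeating_suffix_lengths_def by simp
  ultimately show "repeating_in S (drop (length S - k) S)"
    by (metis repeating_in_infix)
qed

definition minimal_unique_in :: "'a list \<Rightarrow> 'a list \<Rightarrow> bool" where
  "minimal_unique_in S w \<longleftrightarrow>
     unique_in S w \<and> (\<forall>u. is_substring u w \<and> u \<noteq> w \<longrightarrow> repeating_in S u)"

lemma minimal_unique_in_lrs_extension_iff:
  assumes "S \<noteq> []" and k: "k = length (lrs_of S)"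
  shows "minimal_unique_in S (drop (length S - Suc k) S) \<longleftrightarrow>
           repeating_in S (butlast (drop (length S - Suc k) S))"
proof -
  define w where "w = drop (length S - Suc k) S"
  have "Suc k \<le> length S"
    using length_lrs_of_less[OF assms(1)] unfolding k by simp
  then have "w \<noteq> []"
    unfolding w_def by simp
  have "unique_in S w"
  proof (rule unique_in_if_occurs_and_not_repeating)
    show "length S - Suc k \<in> occurrences S w"
      using \<open>Suc k \<le> length S\<close> unfolding w_def by (simp add: occurrences_def)
    show "\<not> repeating_in S w"
      using repeating_suffix_iff_le_length_lrs_of[OF assms(1) \<open>Suc k \<le> length S\<close>]
      unfolding w_def k by simp
  qed
  moreover have "repeating_in S (tl w)"
  proof -
    have "Suc (length S - Suc k) = length S - k"
      using \<open>Suc k \<le> length S\<close> by simp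
    then have "tl w = drop (length S - k) S"
      unfolding w_def by (metis drop_Suc tl_drop)
    then show ?thesis
      using repeating_suffix_iff_le_length_lrs_of[OF assms(1), of k] \<open>Suc k \<le> length S\<close>
      unfolding k by simp
  qed
  ultimately show ?thesis
    unfolding minimal_unique_in_def w_def[symmetric]
    using proper_substrings_repeating_iff[OF \<open>w \<noteq> []\<close>] by simp
qed

lemma minimal_unique_in_snoc_lrs_iff:
  assumes "S' \<noteq> []" and k: "k = length (lrs_of (S' @ [a]))"
  shows "minimal_unique_in (S' @ [a]) (drop (length S' - k) (S' @ [a])) \<longleftrightarrow>
           drop (length S' - k) (S' @ [a]) = replicate (k + 1) a \<or> k \<le> length (lrs_of S')"
proof -
  define x where "x = take (length S' - k) S'"
  define v where "v = drop (length S' - k) S'"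
  have "k \<le> length S'"
    using length_lrs_of_less[of "S' @ [a]"] unfolding k by simp
  then have "length v = k"
    unfolding v_def by simp
  have "S' = x @ v"
    unfolding x_def v_def by simp
  have w: "drop (length S' - k) (S' @ [a]) = v @ [a]"
    unfolding v_def by simp
  have "minimal_unique_in (S' @ [a]) (v @ [a]) \<longleftrightarrow> repeating_in (S' @ [a]) v"
    using minimal_unique_in_lrs_extension_iff[OF _ k] w by simp
  also have "\<dots> \<longleftrightarrow> repeating_in S' v \<or> v = replicate k a"
    using repeating_in_snoc_suffix_iff[of x v a] \<open>length v = k\<close> unfolding \<open>S' = x @ v\<close>
    by simp
  also have "\<dots> \<longleftrightarrow> k \<le> length (lrs_of S') \<or> v @ [a] = replicate (k + 1) a"
    using repeating_suffix_iff_le_length_lrs_of[OF assms(1) \<open>k \<le> length S'\<close>]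
    by (simp add: v_def replicate_append_same[symmetric])
  finally show ?thesis
    unfolding w by blast
qed

lemma length_substr: "j < length T \<Longrightarrow> length (substr T i j) = Suc j - i"
  by (simp add: substr_def)

lemma substr_Suc_right:
  assumes "1 \<le> i" and "i \<le> Suc j" and "j < length T"
  shows "substr T i (Suc j) = substr T i j @ [T ! j]"
proof -
  have "Suc j - i < length (drop (i - 1) T)" and "i - 1 + (Suc j - i) = j"
    using assms by simp_all
  then show ?thesis
    unfolding substr_def using assms(2) by (simp add: Suc_diff_le take_Suc_conv_app_nth)
qed

lemma drop_substr:
  assumes "1 \<le> i" and "i \<le> s"
  shows "drop (s - i) (substr T i t) = substr T s t"
  using assms by (simp add: substr_def drop_take add.commute)

lemma mem_MUS_iff:
  "(s, t) \<in> MUS T i j \<longleftrightarrow>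
     i \<le> s \<and> s \<le> t \<and> t \<le> j \<and> minimal_unique_in (substr T i j) (substr T s t)"
  by (simp add: MUS_def minimal_unique_in_def)

theorem lemma4:
  fixes T :: "'a list" and i j k n :: nat and \<alpha> :: 'a
  assumes "n = length T"
    and "1 \<le> i" and "i \<le> j" and "j < n"
    and "k = length (lrs T i (j + 1))"
    and "\<alpha> = T ! j"
  shows "(j + 1 - k, j + 1) \<in> MUS T i (j + 1) \<longleftrightarrow>
           (substr T (j + 1 - k) (j + 1) = replicate (k + 1) \<alpha> \<or> k \<le> length (lrs T i j))"
proof -
  define S' where "S' = substr T i j"
  have "length S' = Suc j - i"
    using assms(1,4) unfolding S'_def by (simp add: length_substr)
  then have "S' \<noteq> []"
    using assms(3) by auto
  have S: "substr T i (j + 1) = S' @ [\<alpha>]"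
    using substr_Suc_right[of i j T] assms unfolding S'_def by simp
  have k: "k = length (lrs_of (S' @ [\<alpha>]))"
    using assms(5) S by (simp add: lrs_def)
  then have "k \<le> length S'"
    using length_lrs_of_less[of "S' @ [\<alpha>]"] by simp
  have "i \<le> j + 1 - k" and "j + 1 - k - i = length S' - k"
    using \<open>length S' = Suc j - i\<close> \<open>k \<le> length S'\<close> assms(3) by simp_all
  then have w: "substr T (j + 1 - k) (j + 1) = drop (length S' - k) (S' @ [\<alpha>])"
    using drop_substr[OF assms(2) \<open>i \<le> j + 1 - k\<close>, of T "j + 1"] unfolding S by simp
  have "(j + 1 - k, j + 1) \<in> MUS T i (j + 1) \<longleftrightarrow>
          minimal_unique_in (S' @ [\<alpha>]) (drop (length S' - k) (S' @ [\<alpha>]))"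
    using \<open>i \<le> j + 1 - k\<close> unfolding mem_MUS_iff S w by simp
  also have "\<dots> \<longleftrightarrow> substr T (j + 1 - k) (j + 1) = replicate (k + 1) \<alpha> \<or> k \<le> length (lrs T i j)"
    unfolding w lrs_def S'_def[symmetric] by (rule minimal_unique_in_snoc_lrs_iff[OF \<open>S' \<noteq> []\<close> k])
  finally show ?thesis .
qed

end
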